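(* For any valuation profile $\mathbf u$ (of injective valuation functions of $n$ agents over $n$ items), every optimal allocation, i.e. every matching $\mu^*$ maximizing $\sum_i u_i(\mu_i)$, is an outcome of random priority with positive probability: there exists an ordering of the agents for which the serial-dictatorship procedure produces exactly $\mu^*$.
   Context: Agents $N=\{1,\dots,n\}$, items $M=\{1,\dots,n\}$, outcomes are bijections (matchings) $\mu$ with $\mu_i$ the item of agent $i$. Each agent $i$ has an injective valuation function $u_i:M\to\mathbb R$. Random priority picks a uniformly random ordering of agents and then, in that order, gives each agent its most preferred item among those still unassigned. *)

theory Defs
  imports Main "HOL-Library.Multiset" Complex_Main
begin

text \<open>Agents and items are both {1..n}. A valuation profile is u :: nat => nat => real,
  u i x being the value of agent i for item x.\<close>

definition valuation_profile :: "nat \<Rightarrow> (nat \<Rightarrow> nat \<Rightarrow> real) \<Rightarrow> bool" where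
  "valuation_profile n u \<longleftrightarrow> (\<forall>i\<in>{1..n}. inj_on (u i) {1..n})"

definition matching :: "nat \<Rightarrow> (nat \<Rightarrow> nat) \<Rightarrow> bool" where
  "matching n \<mu> \<longleftrightarrow> bij_betw \<mu> {1..n} {1..n}"

definition welfare :: "nat \<Rightarrow> (nat \<Rightarrow> nat \<Rightarrow> real) \<Rightarrow> (nat \<Rightarrow> nat) \<Rightarrow> real" where
  "welfare n u \<mu> = (\<Sum>i\<in>{1..n}. u i (\<mu> i))"

definition optimal_allocation :: "nat \<Rightarrow> (nat \<Rightarrow> nat \<Rightarrow> real) \<Rightarrow> (nat \<Rightarrow> nat) \<Rightarrow> bool" where
  "optimal_allocation n u \<mu> \<longleftrightarrow>
     matching n \<mu> \<and> (\<forall>\<nu>. matching n \<nu> \<longrightarrow> welfare n u \<nu> \<le> welfare n u \<mu>)"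

text \<open>Serial dictatorship: agents pick in the order of the list, each taking its most
  preferred item among the remaining items R. Agents not in the list get the dummy 0.\<close>

fun serial_dictatorship :: "(nat \<Rightarrow> nat \<Rightarrow> real) \<Rightarrow> nat set \<Rightarrow> nat list \<Rightarrow> (nat \<Rightarrow> nat)" where
  "serial_dictatorship u R [] = (\<lambda>_. 0)"
| "serial_dictatorship u R (i # is) =
     (let x = arg_max_on (u i) R in (serial_dictatorship u (R - {x}) is)(i := x))"

definition agent_ordering :: "nat \<Rightarrow> nat list \<Rightarrow> bool" where
  "agent_ordering n \<sigma> \<longleftrightarrow> distinct \<sigma> \<and> set \<sigma> = {1..n}"

end

theory Submission
  imports Defs
begin

(*
  The heart of the argument is a "top choice" property of optimal matchings: in every
  nonempty set A of agents some agent i likes mu i best among the items mu ` A.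
  Otherwise every agent of A strictly envies some other agent of A; the envy map g has
  a nonempty invariant subset C on which it permutes the agents, and reassigning along
  this cycle (each agent of C takes the item of its envied agent) yields a matching of
  strictly larger welfare.

  Given the top-choice property, an ordering is built by induction on |A|: let such an
  agent i pick first from the items mu ` A; injectivity of u i makes its pick exactly
  mu i, and the remaining agents A - {i} face exactly the items mu ` (A - {i}).
*)

lemma arg_max_on_eqI:
  fixes f :: "'a \<Rightarrow> 'b::linorder"
  assumes "a \<in> S" and "\<forall>y\<in>S. f y \<le> f a" and "inj_on f S"
  shows "arg_max_on f S = a"
  unfolding arg_max_on_def arg_max_def
proof (rule someI2[of _ a])
  show "is_arg_max f (\<lambda>x. x \<in> S) a"
    using assms by (auto simp: is_arg_max_linorder)
next
  fix x assume "is_arg_max f (\<lambda>x. x \<in> S) x"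
  then have "x \<in> S" and "f a \<le> f x"
    using assms(1) by (auto simp: is_arg_max_linorder)
  with assms(2) have "f x = f a" by (simp add: order_antisym)
  with assms \<open>x \<in> S\<close> show "x = a" by (auto simp: inj_on_def)
qed

text \<open>A self-map of a finite nonempty set has a nonempty subset on which it is onto
  (for instance a cycle); take an invariant subset of minimal cardinality.\<close>

lemma finite_self_map_has_onto_subset:
  fixes g :: "'a \<Rightarrow> 'a"
  assumes "finite A" and "A \<noteq> {}" and "g ` A \<subseteq> A"
  shows "\<exists>C. C \<subseteq> A \<and> C \<noteq> {} \<and> g ` C = C"
proof -
  let ?invariant = "\<lambda>C. C \<subseteq> A \<and> C \<noteq> {} \<and> g ` C \<subseteq> C"
  obtain C where C: "?invariant C" and minimal: "\<And>D. ?invariant D \<Longrightarrow> card C \<le> card D"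
    using ex_has_least_nat[of ?invariant A card] assms by blast
  have "finite C" using C assms(1) finite_subset by blast
  moreover have "g ` C \<subseteq> C" using C by blast
  moreover have "?invariant (g ` C)" using C by auto
  then have "card C \<le> card (g ` C)" by (rule minimal)
  ultimately have "g ` C = C" by (rule card_seteq)
  with C show ?thesis by blast
qed

text \<open>Reassigning items along a permutation g of a finite set C of agents preserves
  bijectivity: the new allocation is mu composed with g extended by the identity.\<close>

lemma bij_betw_reassign_cycle:
  assumes "bij_betw \<mu> S T" and "C \<subseteq> S" and "finite C" and "g ` C = C"
  shows "bij_betw (\<lambda>i. if i \<in> C then \<mu> (g i) else \<mu> i) S T"
proof -
  have "bij_betw g C C"
    using assms(3,4) by (simp add: bij_betw_def eq_card_imp_inj_on)
  moreover have "bij_betw (\<lambda>i. i) (S - C) (S - C)" by (simp add: bij_betw_def)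
  ultimately have "bij_betw (\<lambda>i. if i \<in> C then g i else i) (C \<union> (S - C)) (C \<union> (S - C))"
    by (rule bij_betw_disjoint_Un) auto
  moreover have "C \<union> (S - C) = S" using assms(2) by blast
  ultimately have "bij_betw (\<lambda>i. if i \<in> C then g i else i) S S" by simp
  from bij_betw_trans[OF this assms(1)] show ?thesis
    by (simp add: comp_def if_distrib)
qed

lemma optimal_allocation_top_choice:
  assumes opt: "optimal_allocation n u \<mu>"
    and A: "A \<subseteq> {1..n}" "A \<noteq> {}"
  shows "\<exists>i\<in>A. \<forall>y\<in>\<mu> ` A. u i y \<le> u i (\<mu> i)"
proof (rule ccontr)
  assume "\<not> ?thesis"
  then have "\<forall>i\<in>A. \<exists>j\<in>A. u i (\<mu> i) < u i (\<mu> j)" by (auto simp: not_le)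
  then obtain g where envy: "\<forall>i\<in>A. g i \<in> A \<and> u i (\<mu> i) < u i (\<mu> (g i))"
    by metis
  have "finite A" using A(1) finite_subset by blast
  moreover have "g ` A \<subseteq> A" using envy by blast
  ultimately obtain C where C: "C \<subseteq> A" "C \<noteq> {}" "g ` C = C"
    using finite_self_map_has_onto_subset[OF _ A(2)] by metis
  have "finite C" using C(1) \<open>finite A\<close> finite_subset by blast
  define \<nu> where "\<nu> = (\<lambda>i. if i \<in> C then \<mu> (g i) else \<mu> i)"
  have "bij_betw \<mu> {1..n} {1..n}"
    using opt by (simp add: optimal_allocation_def matching_def)
  then have "matching n \<nu>"
    unfolding matching_def \<nu>_def
    using C A(1) \<open>finite C\<close> by (intro bij_betw_reassign_cycle) auto
  then have "welfare n u \<nu> \<le> welfare n u \<mu>"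
    using opt by (simp add: optimal_allocation_def)
  moreover have "welfare n u \<mu> < welfare n u \<nu>"
    unfolding welfare_def
  proof (rule sum_strict_mono_ex1)
    show "\<forall>i\<in>{1..n}. u i (\<mu> i) \<le> u i (\<nu> i)"
      using envy C(1) by (auto simp: \<nu>_def less_imp_le)
    obtain c where "c \<in> C" using C(2) by blast
    then show "\<exists>i\<in>{1..n}. u i (\<mu> i) < u i (\<nu> i)"
      using envy C(1) A(1) by (intro bexI[of _ c]) (auto simp: \<nu>_def)
  qed simp
  ultimately show False by simp
qed

lemma serial_dictatorship_reaches_optimal:
  assumes vp: "valuation_profile n u" and opt: "optimal_allocation n u \<mu>"
    and A: "A \<subseteq> {1..n}"
  shows "\<exists>\<sigma>. distinct \<sigma> \<and> set \<sigma> = A \<and>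
           (\<forall>i\<in>A. serial_dictatorship u (\<mu> ` A) \<sigma> i = \<mu> i)"
  using A
proof (induction "card A" arbitrary: A)
  case 0
  then have "A = {}" using finite_subset by fastforce
  then show ?case by (intro exI[of _ "[]"]) simp
next
  case (Suc k)
  have "finite A" using Suc.prems finite_subset by blast
  with Suc.hyps(2) have "A \<noteq> {}" by auto
  then obtain i where i: "i \<in> A" and top: "\<forall>y\<in>\<mu> ` A. u i y \<le> u i (\<mu> i)"
    using optimal_allocation_top_choice[OF opt Suc.prems] by blast
  have \<mu>: "bij_betw \<mu> {1..n} {1..n}"
    using opt by (simp add: optimal_allocation_def matching_def)
  have "\<mu> ` A \<subseteq> {1..n}"
    using Suc.prems bij_betw_imp_surj_on[OF \<mu>] by blast
  moreover have "inj_on (u i) {1..n}"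
    using vp i Suc.prems by (simp add: valuation_profile_def subset_iff)
  ultimately have "inj_on (u i) (\<mu> ` A)" by (rule inj_on_subset[rotated])
  then have first_pick: "arg_max_on (u i) (\<mu> ` A) = \<mu> i"
    using i top by (intro arg_max_on_eqI) simp_all
  have "inj_on \<mu> A"
    using inj_on_subset[OF bij_betw_imp_inj_on[OF \<mu>] Suc.prems] .
  then have remaining: "\<mu> ` A - {\<mu> i} = \<mu> ` (A - {i})"
    using i by (simp add: inj_on_image_set_diff)
  have "k = card (A - {i})" using Suc.hyps(2) i \<open>finite A\<close> by simp
  moreover have "A - {i} \<subseteq> {1..n}" using Suc.prems by blast
  ultimately obtain \<sigma> where \<sigma>: "distinct \<sigma>" "set \<sigma> = A - {i}"
    "\<forall>j\<in>A - {i}. serial_dictatorship u (\<mu> ` (A - {i})) \<sigma> j = \<mu> j"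
    using Suc.hyps(1) by blast
  have "distinct (i # \<sigma>)" and "set (i # \<sigma>) = A"
    using \<sigma>(1,2) i by auto
  moreover have "\<forall>j\<in>A. serial_dictatorship u (\<mu> ` A) (i # \<sigma>) j = \<mu> j"
    using \<sigma>(3) by (simp add: first_pick remaining)
  ultimately show ?case by blast
qed

theorem lemma2:
  fixes n :: nat and u :: "nat \<Rightarrow> nat \<Rightarrow> real" and \<mu> :: "nat \<Rightarrow> nat"
  assumes "valuation_profile n u"
    and "optimal_allocation n u \<mu>"
  shows "\<exists>\<sigma>. agent_ordering n \<sigma> \<and>
           (\<forall>i\<in>{1..n}. serial_dictatorship u {1..n} \<sigma> i = \<mu> i)"
proof -
  have "\<mu> ` {1..n} = {1..n}"
    using assms(2) by (simp add: optimal_allocation_def matching_def bij_betw_def)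
  with serial_dictatorship_reaches_optimal[OF assms, of "{1..n}"] show ?thesis
    by (auto simp: agent_ordering_def)
qed

end
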